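(* Let $S$ be a polynomial ring over a field and let $I$, $J \subseteq S$ be ideals that can be written as $I = L_I + Q_I$ and $J = L_J + Q_J$, where (1) $L_I$ and $L_J$ are generated by disjoint sets of variables; (2) $Q_J$ is generated by quadratic monomials, none of which is divisible by a generator of $L_J$; (3) $Q_I \subseteq J$; (4) $Q_J \subseteq I$. Then $I \cap J = L_IL_J + Q_I + Q_J$. *)

theory Defs
  imports "HOL-Library.Poly_Mapping"
begin

text \<open>Polynomial ring over a field k in the variables of type 'v:
  a polynomial is a finitely supported map from monomials (exponent vectors,
  finitely supported maps 'v to nat) to coefficients.\<close>

type_synonym ('v, 'k) mpoly = "('v \<Rightarrow>\<^sub>0 nat) \<Rightarrow>\<^sub>0 'k"

definition mvar :: "'v \<Rightarrow> ('v, 'k::comm_ring_1) mpoly" where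
  "mvar x = Poly_Mapping.single (Poly_Mapping.single x 1) 1"

definition mmonom :: "('v \<Rightarrow>\<^sub>0 nat) \<Rightarrow> ('v, 'k::comm_ring_1) mpoly" where
  "mmonom m = Poly_Mapping.single m 1"

definition mdeg :: "('v \<Rightarrow>\<^sub>0 nat) \<Rightarrow> nat" where
  "mdeg m = sum (Poly_Mapping.lookup m) (Poly_Mapping.keys m)"

definition is_ideal :: "'a::comm_ring_1 set \<Rightarrow> bool" where
  "is_ideal I \<longleftrightarrow> 0 \<in> I \<and> (\<forall>a\<in>I. \<forall>b\<in>I. a + b \<in> I) \<and> (\<forall>r. \<forall>a\<in>I. r * a \<in> I)"

definition gen_ideal :: "'a::comm_ring_1 set \<Rightarrow> 'a set" where
  "gen_ideal G = \<Inter>{I. is_ideal I \<and> G \<subseteq> I}"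

definition ideal_sum :: "'a::comm_ring_1 set \<Rightarrow> 'a set \<Rightarrow> 'a set" where
  "ideal_sum A B = {a + b | a b. a \<in> A \<and> b \<in> B}"

definition ideal_prod :: "'a::comm_ring_1 set \<Rightarrow> 'a set \<Rightarrow> 'a set" where
  "ideal_prod A B = gen_ideal {a * b | a b. a \<in> A \<and> b \<in> B}"

end

theory Submission
  imports Defs
begin

text \<open>
  Since \<open>Q\<^sub>I \<subseteq> J\<close>, the modular law gives \<open>I \<inter> J = (L\<^sub>I \<inter> J) + Q\<^sub>I\<close>, so it suffices to show
  \<open>L\<^sub>I \<inter> J \<subseteq> L\<^sub>I L\<^sub>J + Q\<^sub>J\<close>; the reverse inclusion of the identity is immediate.
  The ideals \<open>L\<^sub>I\<close>, \<open>L\<^sub>J\<close>, \<open>Q\<^sub>J\<close> are monomial ideals: a polynomial lies in one of them iff each of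
  its monomials is a multiple of a generator. A monomial of \<open>f \<in> L\<^sub>I \<inter> J\<close> is a multiple of some
  \<open>x \<in> V\<^sub>I\<close> and either of a generator of \<open>Q\<^sub>J\<close> or of some \<open>y \<in> V\<^sub>J\<close>; in the latter case
  \<open>x \<noteq> y\<close>, so it is a multiple of \<open>x y\<close>. Splitting the terms of \<open>f\<close> accordingly gives
  \<open>f \<in> L\<^sub>I L\<^sub>J + Q\<^sub>J\<close>.
\<close>

lemma is_ideal_gen_ideal: "is_ideal (gen_ideal G)"
  unfolding gen_ideal_def is_ideal_def by auto

lemma gen_ideal_superset: "G \<subseteq> gen_ideal G"
  unfolding gen_ideal_def by auto

lemma gen_ideal_least: "is_ideal I \<Longrightarrow> G \<subseteq> I \<Longrightarrow> gen_ideal G \<subseteq> I"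
  unfolding gen_ideal_def by auto

lemma ideal_zero: "is_ideal I \<Longrightarrow> 0 \<in> I"
  unfolding is_ideal_def by auto

lemma ideal_add: "is_ideal I \<Longrightarrow> a \<in> I \<Longrightarrow> b \<in> I \<Longrightarrow> a + b \<in> I"
  unfolding is_ideal_def by auto

lemma ideal_mult_left: "is_ideal I \<Longrightarrow> a \<in> I \<Longrightarrow> r * a \<in> I"
  unfolding is_ideal_def by auto

lemma ideal_mult_right: "is_ideal I \<Longrightarrow> a \<in> I \<Longrightarrow> a * r \<in> I"
  using ideal_mult_left by (metis mult.commute)

lemma ideal_diff: "is_ideal I \<Longrightarrow> a \<in> I \<Longrightarrow> b \<in> I \<Longrightarrow> a - b \<in> I"
  using ideal_add[of I a "-1 * b"] ideal_mult_left[of I b "-1"] by simp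

lemma ideal_sum_closed: "is_ideal I \<Longrightarrow> (\<And>x. x \<in> A \<Longrightarrow> f x \<in> I) \<Longrightarrow> sum f A \<in> I"
  by (induction A rule: infinite_finite_induct) (simp_all add: ideal_zero ideal_add)

lemma is_ideal_Int: "is_ideal A \<Longrightarrow> is_ideal B \<Longrightarrow> is_ideal (A \<inter> B)"
  unfolding is_ideal_def by auto

lemma is_ideal_ideal_sum:
  assumes "is_ideal A" "is_ideal B"
  shows "is_ideal (ideal_sum A B)"
  unfolding is_ideal_def
proof (intro conjI ballI allI)
  show "0 \<in> ideal_sum A B"
    using assms ideal_zero unfolding ideal_sum_def by force
next
  fix x y assume "x \<in> ideal_sum A B" "y \<in> ideal_sum A B"
  then obtain a b a' b' where "x = a + b" "y = a' + b'" "a \<in> A" "a' \<in> A" "b \<in> B" "b' \<in> B"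
    unfolding ideal_sum_def by blast
  moreover have "x + y = (a + a') + (b + b')"
    using calculation by (simp add: algebra_simps)
  ultimately show "x + y \<in> ideal_sum A B"
    using assms ideal_add unfolding ideal_sum_def by blast
next
  fix r x assume "x \<in> ideal_sum A B"
  then obtain a b where "x = a + b" "a \<in> A" "b \<in> B"
    unfolding ideal_sum_def by blast
  moreover have "r * x = r * a + r * b"
    using calculation by (simp add: algebra_simps)
  ultimately show "r * x \<in> ideal_sum A B"
    using assms ideal_mult_left unfolding ideal_sum_def by blast
qed

lemma ideal_sum_least: "is_ideal C \<Longrightarrow> A \<subseteq> C \<Longrightarrow> B \<subseteq> C \<Longrightarrow> ideal_sum A B \<subseteq> C"
  unfolding ideal_sum_def using ideal_add by blast

lemma ideal_sum_upper1: "is_ideal B \<Longrightarrow> A \<subseteq> ideal_sum A B"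
  unfolding ideal_sum_def using ideal_zero by force

lemma ideal_sum_upper2: "is_ideal A \<Longrightarrow> B \<subseteq> ideal_sum A B"
  unfolding ideal_sum_def using ideal_zero by force

lemma ideal_prod_subset_Int:
  assumes "is_ideal A" "is_ideal B"
  shows "ideal_prod A B \<subseteq> A \<inter> B"
  unfolding ideal_prod_def
  using assms by (intro gen_ideal_least is_ideal_Int)
    (auto intro: ideal_mult_left ideal_mult_right)

lemma ideal_sum_Int_modular:
  assumes "is_ideal J" "Q \<subseteq> J"
  shows "ideal_sum L Q \<inter> J \<subseteq> ideal_sum (L \<inter> J) Q"
proof
  fix f assume "f \<in> ideal_sum L Q \<inter> J"
  then obtain l q where "l \<in> L" "q \<in> Q" "f = l + q" "f \<in> J"
    unfolding ideal_sum_def by blast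
  have "f - q \<in> J"
    using assms \<open>f \<in> J\<close> \<open>q \<in> Q\<close> by (blast intro: ideal_diff)
  with \<open>f = l + q\<close> \<open>l \<in> L\<close> have "l \<in> L \<inter> J" by simp
  with \<open>q \<in> Q\<close> \<open>f = l + q\<close> show "f \<in> ideal_sum (L \<inter> J) Q"
    unfolding ideal_sum_def by blast
qed

lemma ideal_sum_Int_ideal_sum:
  assumes LI: "is_ideal LI" and LJ: "is_ideal LJ" and QI: "is_ideal QI" and QJ: "is_ideal QJ"
    and I_def: "I = ideal_sum LI QI" and J_def: "J = ideal_sum LJ QJ"
    and QI_sub: "QI \<subseteq> J" and QJ_sub: "QJ \<subseteq> I"
    and LI_Int: "LI \<inter> J \<subseteq> ideal_sum (ideal_prod LI LJ) QJ"
  shows "I \<inter> J = ideal_sum (ideal_sum (ideal_prod LI LJ) QI) QJ"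
proof -
  let ?T = "ideal_sum (ideal_sum (ideal_prod LI LJ) QI) QJ"
  have I: "is_ideal I" and J: "is_ideal J"
    unfolding I_def J_def by (simp_all add: is_ideal_ideal_sum LI LJ QI QJ)
  have P: "is_ideal (ideal_prod LI LJ)"
    unfolding ideal_prod_def by (rule is_ideal_gen_ideal)
  have PQ: "is_ideal (ideal_sum (ideal_prod LI LJ) QI)"
    by (simp add: is_ideal_ideal_sum P QI)
  have T: "is_ideal ?T"
    by (simp add: is_ideal_ideal_sum PQ QJ)
  have P_T: "ideal_prod LI LJ \<subseteq> ?T" and QI_T: "QI \<subseteq> ?T" and QJ_T: "QJ \<subseteq> ?T"
    using ideal_sum_upper1[OF QI, of "ideal_prod LI LJ"] ideal_sum_upper2[OF P, of QI]
      ideal_sum_upper1[OF QJ, of "ideal_sum (ideal_prod LI LJ) QI"] ideal_sum_upper2[OF PQ, of QJ]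
    by blast+
  have "I \<inter> J \<subseteq> ideal_sum (LI \<inter> J) QI"
    unfolding I_def by (rule ideal_sum_Int_modular[OF J QI_sub])
  also have "\<dots> \<subseteq> ?T"
  proof (rule ideal_sum_least[OF T _ QI_T])
    from LI_Int show "LI \<inter> J \<subseteq> ?T"
      using ideal_sum_least[OF T P_T QJ_T] by blast
  qed
  finally have "I \<inter> J \<subseteq> ?T" .
  moreover have "?T \<subseteq> I \<inter> J"
  proof (intro ideal_sum_least is_ideal_Int I J)
    show "ideal_prod LI LJ \<subseteq> I \<inter> J"
      using ideal_prod_subset_Int[OF LI LJ] ideal_sum_upper1[OF QI, of LI]
        ideal_sum_upper1[OF QJ, of LJ] unfolding I_def J_def by blast
    show "QI \<subseteq> I \<inter> J"
      using QI_sub ideal_sum_upper2[OF LI, of QI] unfolding I_def by blast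
    show "QJ \<subseteq> I \<inter> J"
      using QJ_sub ideal_sum_upper2[OF LJ, of QJ] unfolding J_def by blast
  qed
  ultimately show ?thesis by blast
qed

definition monomial_multiples :: "('v \<Rightarrow>\<^sub>0 nat) set \<Rightarrow> ('v, 'k::comm_ring_1) mpoly set" where
  "monomial_multiples G = {p. \<forall>m\<in>Poly_Mapping.keys p. \<exists>g\<in>G. \<exists>h. m = g + h}"

lemma is_ideal_monomial_multiples: "is_ideal (monomial_multiples G)"
  unfolding is_ideal_def monomial_multiples_def
proof (intro conjI ballI allI; clarsimp)
  fix a b :: "('a, 'b) mpoly" and m
  assume "\<forall>m\<in>Poly_Mapping.keys a. \<exists>g\<in>G. \<exists>h. m = g + h"
    and "\<forall>m\<in>Poly_Mapping.keys b. \<exists>g\<in>G. \<exists>h. m = g + h"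
    and "m \<in> Poly_Mapping.keys (a + b)"
  then show "\<exists>g\<in>G. \<exists>h. m = g + h" using keys_add[of a b] by blast
next
  fix r a :: "('a, 'b) mpoly" and m
  assume a: "\<forall>m\<in>Poly_Mapping.keys a. \<exists>g\<in>G. \<exists>h. m = g + h"
    and "m \<in> Poly_Mapping.keys (r * a)"
  then obtain u v where "m = u + v" "v \<in> Poly_Mapping.keys a" using keys_mult[of r a] by blast
  with a show "\<exists>g\<in>G. \<exists>h. m = g + h" by (metis add.left_commute)
qed

lemma poly_mapping_sum_single:
  "(p :: 'a \<Rightarrow>\<^sub>0 'b::comm_monoid_add) =
     (\<Sum>m\<in>Poly_Mapping.keys p. Poly_Mapping.single m (Poly_Mapping.lookup p m))"
  by (rule poly_mapping_eqI)
    (simp add: lookup_sum lookup_single when_def in_keys_iff)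

lemma gen_ideal_mmonom_eq_monomial_multiples:
  "gen_ideal (mmonom ` G) = (monomial_multiples G :: ('v, 'k::comm_ring_1) mpoly set)"
proof
  show "gen_ideal (mmonom ` G) \<subseteq> (monomial_multiples G :: ('v, 'k) mpoly set)"
    by (rule gen_ideal_least[OF is_ideal_monomial_multiples])
      (auto simp: monomial_multiples_def mmonom_def intro!: exI[of _ 0])
next
  show "monomial_multiples G \<subseteq> (gen_ideal (mmonom ` G) :: ('v, 'k) mpoly set)"
  proof
    fix p :: "('v, 'k) mpoly" assume p: "p \<in> monomial_multiples G"
    have "(\<Sum>m\<in>Poly_Mapping.keys p. Poly_Mapping.single m (Poly_Mapping.lookup p m))
            \<in> gen_ideal (mmonom ` G)"
    proof (rule ideal_sum_closed[OF is_ideal_gen_ideal])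
      fix m assume "m \<in> Poly_Mapping.keys p"
      then obtain g h where "g \<in> G" "m = g + h"
        using p unfolding monomial_multiples_def by blast
      then have "Poly_Mapping.single m (Poly_Mapping.lookup p m)
                   = Poly_Mapping.single h (Poly_Mapping.lookup p m) * mmonom g"
        by (simp add: mmonom_def mult_single add.commute)
      with \<open>g \<in> G\<close> show "Poly_Mapping.single m (Poly_Mapping.lookup p m) \<in> gen_ideal (mmonom ` G)"
        by (metis gen_ideal_superset image_subset_iff ideal_mult_left is_ideal_gen_ideal)
    qed
    then show "p \<in> gen_ideal (mmonom ` G)"
      by (subst poly_mapping_sum_single)
  qed
qed

lemma monomial_multiples_Un_split:
  assumes "p \<in> monomial_multiples (A \<union> B)"
  obtains a b where "a \<in> monomial_multiples A" "b \<in> monomial_multiples B" "p = a + b"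
proof -
  define D where "D = {m. \<exists>g\<in>A. \<exists>h. m = g + h}"
  define t where "t m = Poly_Mapping.single m (Poly_Mapping.lookup p m)" for m
  define a where "a = sum t (Poly_Mapping.keys p \<inter> D)"
  define b where "b = sum t (Poly_Mapping.keys p - D)"
  have keys_sum_t: "Poly_Mapping.keys (sum t S) \<subseteq> S" for S
    using keys_sum[of t S] by (auto simp: t_def)
  have "p = sum t (Poly_Mapping.keys p)"
    unfolding t_def by (rule poly_mapping_sum_single)
  also have "\<dots> = a + b"
    unfolding a_def b_def by (rule sum.Int_Diff) simp
  finally have "p = a + b" .
  moreover have "a \<in> monomial_multiples A"
    using keys_sum_t unfolding a_def monomial_multiples_def D_def by blast
  moreover have "b \<in> monomial_multiples B"
    using assms keys_sum_t unfolding b_def monomial_multiples_def D_def by blast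
  ultimately show thesis using that by blast
qed

lemma monomial_multiples_mono: "A \<subseteq> B \<Longrightarrow> monomial_multiples A \<subseteq> monomial_multiples B"
  unfolding monomial_multiples_def by blast

lemma mvar_eq_mmonom: "mvar x = mmonom (Poly_Mapping.single x 1)"
  unfolding mvar_def mmonom_def by simp

lemma single_one_dvd_iff:
  "(\<exists>h. m = Poly_Mapping.single x 1 + h) \<longleftrightarrow> 0 < Poly_Mapping.lookup m x"
  for m :: "'v \<Rightarrow>\<^sub>0 nat"
proof
  assume "0 < Poly_Mapping.lookup m x"
  then have "m = Poly_Mapping.single x 1 + (m - Poly_Mapping.single x 1)"
    by (intro poly_mapping_eqI) (auto simp: lookup_add lookup_minus lookup_single when_def)
  then show "\<exists>h. m = Poly_Mapping.single x 1 + h" ..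
qed (auto simp: lookup_add)

lemma single_add_single_dvd:
  fixes m :: "'v \<Rightarrow>\<^sub>0 nat"
  assumes "x \<noteq> y" "0 < Poly_Mapping.lookup m x" "0 < Poly_Mapping.lookup m y"
  obtains h where "m = Poly_Mapping.single x 1 + Poly_Mapping.single y 1 + h"
proof -
  from single_one_dvd_iff[THEN iffD2, OF assms(2)]
  obtain h where h: "m = Poly_Mapping.single x 1 + h" ..
  with assms have "0 < Poly_Mapping.lookup h y"
    by (simp add: lookup_add lookup_single)
  from single_one_dvd_iff[THEN iffD2, OF this]
  obtain h' where "h = Poly_Mapping.single y 1 + h'" ..
  with h show thesis
    by (intro that[of h']) (simp add: add.assoc)
qed

lemma monomial_multiples_vars_Int:
  fixes V W :: "'v set"
  assumes "V \<inter> W = {}"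
  shows "monomial_multiples ((\<lambda>x. Poly_Mapping.single x 1) ` V)
           \<inter> monomial_multiples ((\<lambda>y. Poly_Mapping.single y 1) ` W \<union> G)
         \<subseteq> (monomial_multiples
              ({Poly_Mapping.single x 1 + Poly_Mapping.single y 1 | x y. x \<in> V \<and> y \<in> W} \<union> G)
            :: ('v, 'k::comm_ring_1) mpoly set)"
proof (intro subsetI, unfold monomial_multiples_def, safe)
  fix p :: "('v, 'k) mpoly" and m
  assume V: "\<forall>m\<in>Poly_Mapping.keys p. \<exists>g\<in>(\<lambda>x. Poly_Mapping.single x 1) ` V. \<exists>h. m = g + h"
    and WG: "\<forall>m\<in>Poly_Mapping.keys p. \<exists>g\<in>(\<lambda>y. Poly_Mapping.single y 1) ` W \<union> G. \<exists>h. m = g + h"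
    and "m \<in> Poly_Mapping.keys p"
  obtain x where "x \<in> V" and x: "0 < Poly_Mapping.lookup m x"
    using V \<open>m \<in> _\<close> by (auto simp flip: single_one_dvd_iff)
  from WG \<open>m \<in> _\<close> consider (G) g h where "g \<in> G" "m = g + h"
    | (W) y where "y \<in> W" "0 < Poly_Mapping.lookup m y"
    by (auto simp flip: single_one_dvd_iff)
  then show "\<exists>g\<in>{Poly_Mapping.single x 1 + Poly_Mapping.single y 1 | x y. x \<in> V \<and> y \<in> W} \<union> G.
      \<exists>h. m = g + h"
  proof cases
    case W
    with \<open>x \<in> V\<close> assms have "x \<noteq> y" by blast
    then obtain h where "m = Poly_Mapping.single x 1 + Poly_Mapping.single y 1 + h"
      using x \<open>0 < Poly_Mapping.lookup m y\<close> by (rule single_add_single_dvd)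
    with \<open>x \<in> V\<close> \<open>y \<in> W\<close> show ?thesis by blast
  qed blast
qed

lemma var_ideal_Int_subset:
  fixes V W :: "'v set" and G :: "('v \<Rightarrow>\<^sub>0 nat) set"
  assumes "V \<inter> W = {}"
  defines "L\<^sub>V \<equiv> gen_ideal (mvar ` V) :: ('v, 'k::comm_ring_1) mpoly set"
    and "L\<^sub>W \<equiv> gen_ideal (mvar ` W) :: ('v, 'k) mpoly set"
    and "Q \<equiv> gen_ideal (mmonom ` G) :: ('v, 'k) mpoly set"
  shows "L\<^sub>V \<inter> ideal_sum L\<^sub>W Q \<subseteq> ideal_sum (ideal_prod L\<^sub>V L\<^sub>W) Q"
proof
  define sx :: "'v \<Rightarrow> 'v \<Rightarrow>\<^sub>0 nat" where "sx x = Poly_Mapping.single x 1" for x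
  define P where "P = {sx x + sx y | x y. x \<in> V \<and> y \<in> W}"
  have var_ideal: "gen_ideal (mvar ` U) = monomial_multiples (sx ` U)" for U
    by (simp add: mvar_eq_mmonom image_image sx_def flip: gen_ideal_mmonom_eq_monomial_multiples)
  have Q_eq: "Q = monomial_multiples G"
    unfolding Q_def by (rule gen_ideal_mmonom_eq_monomial_multiples)
  fix f assume f: "f \<in> L\<^sub>V \<inter> ideal_sum L\<^sub>W Q"
  have "ideal_sum L\<^sub>W Q \<subseteq> monomial_multiples (sx ` W \<union> G)"
    unfolding L\<^sub>W_def var_ideal Q_eq
    by (intro ideal_sum_least is_ideal_monomial_multiples monomial_multiples_mono) auto
  with f have "f \<in> monomial_multiples (P \<union> G)"
    using monomial_multiples_vars_Int[OF assms(1), of G]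
    unfolding L\<^sub>V_def var_ideal P_def sx_def by blast
  then obtain a b where a: "a \<in> monomial_multiples P" and b: "b \<in> monomial_multiples G"
    and "f = a + b"
    by (rule monomial_multiples_Un_split)
  have "mmonom ` P \<subseteq> {a * b |a b. a \<in> L\<^sub>V \<and> b \<in> L\<^sub>W}"
  proof (clarsimp simp: P_def)
    fix x y assume "x \<in> V" "y \<in> W"
    then have "mvar x \<in> L\<^sub>V" "mvar y \<in> L\<^sub>W"
      unfolding L\<^sub>V_def L\<^sub>W_def using gen_ideal_superset by blast+
    moreover have "mmonom (sx x + sx y) = mvar x * mvar y"
      by (simp add: sx_def mmonom_def mvar_def mult_single)
    ultimately show "\<exists>a b. mmonom (sx x + sx y) = a * b \<and> a \<in> L\<^sub>V \<and> b \<in> L\<^sub>W"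
      by blast
  qed
  then have "monomial_multiples P \<subseteq> ideal_prod L\<^sub>V L\<^sub>W"
    unfolding ideal_prod_def gen_ideal_mmonom_eq_monomial_multiples[symmetric]
    by (intro gen_ideal_least is_ideal_gen_ideal) (use gen_ideal_superset in blast)
  with a b \<open>f = a + b\<close> show "f \<in> ideal_sum (ideal_prod L\<^sub>V L\<^sub>W) Q"
    unfolding ideal_sum_def Q_eq by blast
qed

theorem lemma1p5:
  fixes I J LI LJ QI QJ :: "('v::finite, 'k::field) mpoly set"
    and VI VJ :: "'v set"
    and GJ :: "('v \<Rightarrow>\<^sub>0 nat) set"
  assumes LI_def: "LI = gen_ideal (mvar ` VI)"
    and LJ_def: "LJ = gen_ideal (mvar ` VJ)"
    and disj: "VI \<inter> VJ = {}"
    and QI_ideal: "is_ideal QI"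
    and QJ_def: "QJ = gen_ideal (mmonom ` GJ)"
    and GJ_quad: "\<forall>m\<in>GJ. mdeg m = 2"
    and GJ_notdiv: "\<forall>m\<in>GJ. \<forall>x\<in>VJ. Poly_Mapping.lookup m x = 0"
    and I_def: "I = ideal_sum LI QI"
    and J_def: "J = ideal_sum LJ QJ"
    and QI_sub: "QI \<subseteq> J"
    and QJ_sub: "QJ \<subseteq> I"
  shows "I \<inter> J = ideal_sum (ideal_sum (ideal_prod LI LJ) QI) QJ"
proof (rule ideal_sum_Int_ideal_sum)
  show "is_ideal LI" "is_ideal LJ" "is_ideal QJ"
    unfolding LI_def LJ_def QJ_def by (rule is_ideal_gen_ideal)+
  show "LI \<inter> J \<subseteq> ideal_sum (ideal_prod LI LJ) QJ"
    unfolding LI_def LJ_def J_def QJ_def by (rule var_ideal_Int_subset[OF disj])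
qed (fact QI_ideal I_def J_def QI_sub QJ_sub)+

end
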